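(* Assume the setting of the context. Suppose $\gamma\in\mathcal{P}(S^K)$ is such that $\mathcal{M}(\gamma)=\{\nu\in\mathcal{P}(S^K):\gamma=M\nu\}$ is non-empty. Then $\inf\{J(\nu):\nu\in\mathcal{M}(\gamma)\}$ is attained at the symmetric measure \[ \nu_{sym}(\mathbf{x})=\frac{\gamma(\mathbf{x})}{K!\,\rho(\mathbf{x})},\qquad \mathbf{x}\in S^K. \]
   Context: **State space and dynamics.** $S$ is a finite set and $K\ge2$ an integer. For $k=1,\dots,K$, $\Gamma^k$ is an irreducible intensity matrix on $S$. It is reversible with respect to its unique invariant distribution $\mu_k$ (so $\mu_k>0$). Set $\mu=\mu_1\times\cdots\times\mu_K$. **Permutations and weights.** $\Sigma_K$ is the set of permutations of $\{1,\dots,K\}$, and $\mathbf{x}^\sigma=(x_{\sigma^{-1}(1)},\dots,x_{\sigma^{-1}(K)})$. Define $\rho(\mathbf{x})=\mu(\mathbf{x})/\sum_{\sigma'}\mu(\mathbf{x}^{\sigma'})$. **Infinite swapping rates.** - $\Gamma^\infty$ is the rate matrix on $S^K$ with $\Gamma^\infty_{\mathbf{x},\mathbf{y}}=\sum_\sigma\rho(\mathbf{x}^\sigma)\Gamma^{\sigma(i)}_{x_i,y_i}$ when $\mathbf{y}$ differs from $\mathbf{x}$ exactly in coordinate $i$. - Off-diagonal rates between states differing in two or more coordinates are $0$. - $q^\infty(\mathbf{x})=\sum_{\mathbf{y}\ne\mathbf{x}}\Gamma^\infty_{\mathbf{x},\mathbf{y}}$. - $\bar\mu(\mathbf{x})=\frac1{K!}\sum_\sigma\mu(\mathbf{x}^\sigma)$.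 **Map and functional.** - $(M\nu)(\mathbf{x})=\rho(\mathbf{x})\sum_{\sigma}\nu(\mathbf{x}^\sigma)$ for $\nu\in\mathcal{P}(S^K)$. - For $\nu\in\mathcal{P}(S^K)$ with $\theta=\nu/\bar\mu$, \[ J(\nu)=\sum_{\mathbf{x}}q^\infty(\mathbf{x})\theta(\mathbf{x})\bar\mu(\mathbf{x})-\sum_{\mathbf{x}\ne\mathbf{y}}\theta^{1/2}(\mathbf{x})\theta^{1/2}(\mathbf{y})\Gamma^\infty_{\mathbf{x},\mathbf{y}}\bar\mu(\mathbf{x}). \] *)

theory Defs
  imports Complex_Main "HOL-Combinatorics.Permutations"
begin

text \<open>State space S is a finite type 'a; the index set {1..K} is a finite type 'k
  with K = CARD('k). Configurations in S^K are functions 'k => 'a.\<close>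

definition intensity_matrix :: "('a::finite \<Rightarrow> 'a \<Rightarrow> real) \<Rightarrow> bool" where
  "intensity_matrix G \<longleftrightarrow> (\<forall>x y. x \<noteq> y \<longrightarrow> G x y \<ge> 0) \<and> (\<forall>x. (\<Sum>y\<in>UNIV. G x y) = 0)"

definition irreducible_im :: "('a::finite \<Rightarrow> 'a \<Rightarrow> real) \<Rightarrow> bool" where
  "irreducible_im G \<longleftrightarrow> (\<forall>x y. (x, y) \<in> {(a, b). a \<noteq> b \<and> G a b > 0}\<^sup>*)"

definition is_prob :: "('b::finite \<Rightarrow> real) \<Rightarrow> bool" where
  "is_prob p \<longleftrightarrow> (\<forall>x. p x \<ge> 0) \<and> (\<Sum>x\<in>UNIV. p x) = 1"

definition invariant_dist :: "('a::finite \<Rightarrow> 'a \<Rightarrow> real) \<Rightarrow> ('a \<Rightarrow> real) \<Rightarrow> bool" where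
  "invariant_dist G m \<longleftrightarrow> is_prob m \<and> (\<forall>y. (\<Sum>x\<in>UNIV. m x * G x y) = 0)"

definition reversible :: "('a::finite \<Rightarrow> 'a \<Rightarrow> real) \<Rightarrow> ('a \<Rightarrow> real) \<Rightarrow> bool" where
  "reversible G m \<longleftrightarrow> (\<forall>x y. m x * G x y = m y * G y x)"

definition perms :: "('k::finite \<Rightarrow> 'k) set" where
  "perms = {\<sigma>. \<sigma> permutes (UNIV :: 'k set)}"

definition perm_act :: "('k::finite \<Rightarrow> 'a) \<Rightarrow> ('k \<Rightarrow> 'k) \<Rightarrow> ('k \<Rightarrow> 'a)" where
  "perm_act x \<sigma> = x \<circ> inv \<sigma>"

definition mu_prod :: "('k::finite \<Rightarrow> 'a::finite \<Rightarrow> real) \<Rightarrow> ('k \<Rightarrow> 'a) \<Rightarrow> real" where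
  "mu_prod mu x = (\<Prod>k\<in>UNIV. mu k (x k))"

definition rho :: "('k::finite \<Rightarrow> 'a::finite \<Rightarrow> real) \<Rightarrow> ('k \<Rightarrow> 'a) \<Rightarrow> real" where
  "rho mu x = mu_prod mu x / (\<Sum>\<sigma>\<in>perms. mu_prod mu (perm_act x \<sigma>))"

definition Gamma_inf ::
  "('k::finite \<Rightarrow> 'a::finite \<Rightarrow> real) \<Rightarrow> ('k \<Rightarrow> 'a \<Rightarrow> 'a \<Rightarrow> real) \<Rightarrow> ('k \<Rightarrow> 'a) \<Rightarrow> ('k \<Rightarrow> 'a) \<Rightarrow> real" where
  "Gamma_inf mu G x y =
     (if \<exists>!i. x i \<noteq> y i then
        (let i = (THE i. x i \<noteq> y i) in
          \<Sum>\<sigma>\<in>perms. rho mu (perm_act x \<sigma>) * G (\<sigma> i) (x i) (y i))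
      else 0)"

definition q_inf ::
  "('k::finite \<Rightarrow> 'a::finite \<Rightarrow> real) \<Rightarrow> ('k \<Rightarrow> 'a \<Rightarrow> 'a \<Rightarrow> real) \<Rightarrow> ('k \<Rightarrow> 'a) \<Rightarrow> real" where
  "q_inf mu G x = (\<Sum>y\<in>UNIV - {x}. Gamma_inf mu G x y)"

definition mu_bar :: "('k::finite \<Rightarrow> 'a::finite \<Rightarrow> real) \<Rightarrow> ('k \<Rightarrow> 'a) \<Rightarrow> real" where
  "mu_bar mu x = (1 / real (fact (card (UNIV :: 'k set)))) * (\<Sum>\<sigma>\<in>perms. mu_prod mu (perm_act x \<sigma>))"

definition Mmap :: "('k::finite \<Rightarrow> 'a::finite \<Rightarrow> real) \<Rightarrow> (('k \<Rightarrow> 'a) \<Rightarrow> real) \<Rightarrow> ('k \<Rightarrow> 'a) \<Rightarrow> real" where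
  "Mmap mu \<nu> x = rho mu x * (\<Sum>\<sigma>\<in>perms. \<nu> (perm_act x \<sigma>))"

definition Jfun ::
  "('k::finite \<Rightarrow> 'a::finite \<Rightarrow> real) \<Rightarrow> ('k \<Rightarrow> 'a \<Rightarrow> 'a \<Rightarrow> real) \<Rightarrow> (('k \<Rightarrow> 'a) \<Rightarrow> real) \<Rightarrow> real" where
  "Jfun mu G \<nu> =
     (let \<theta> = (\<lambda>x. \<nu> x / mu_bar mu x) in
       (\<Sum>x\<in>UNIV. q_inf mu G x * \<theta> x * mu_bar mu x)
       - (\<Sum>x\<in>UNIV. \<Sum>y\<in>UNIV - {x}. sqrt (\<theta> x) * sqrt (\<theta> y) * Gamma_inf mu G x y * mu_bar mu x))"

definition Mset :: "('k::finite \<Rightarrow> 'a::finite \<Rightarrow> real) \<Rightarrow> (('k \<Rightarrow> 'a) \<Rightarrow> real) \<Rightarrow> (('k \<Rightarrow> 'a) \<Rightarrow> real) set" where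
  "Mset mu \<gamma> = {\<nu>. is_prob \<nu> \<and> \<gamma> = Mmap mu \<nu>}"

definition nu_sym :: "('k::finite \<Rightarrow> 'a::finite \<Rightarrow> real) \<Rightarrow> (('k \<Rightarrow> 'a) \<Rightarrow> real) \<Rightarrow> ('k \<Rightarrow> 'a) \<Rightarrow> real" where
  "nu_sym mu \<gamma> x = \<gamma> x / (real (fact (card (UNIV :: 'k set))) * rho mu x)"

end

theory Submission
  imports Defs "HOL-Analysis.Convex"
begin

text \<open>The edge terms of \<open>J\<close> are of the form \<open>a - c\<^sub>x\<^sub>y \<surd>(a b)\<close> with nonnegative
  rates, and \<open>\<surd>(a b)\<close> is superadditive by Cauchy--Schwarz; together with
  homogeneity, \<open>J\<close> is therefore convex.  All data (\<open>\<mu>\<close>, the rates, \<open>J\<close> and \<open>M\<close>)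
  are invariant under the permutation action, so averaging any \<open>\<nu> \<in> \<M>(\<gamma>)\<close> over the
  \<open>K!\<close> permutations lowers \<open>J\<close> and stays in \<open>\<M>(\<gamma>)\<close>; this average is \<open>\<nu>\<^sub>s\<^sub>y\<^sub>m\<close>.\<close>

lemma finite_perms: "finite (perms :: ('k::finite \<Rightarrow> 'k) set)"
  unfolding perms_def by (simp add: finite_permutations)

lemma card_perms: "card (perms :: ('k::finite \<Rightarrow> 'k) set) = fact (card (UNIV :: 'k set))"
  unfolding perms_def by (simp add: card_permutations)

lemma id_in_perms: "id \<in> perms"
  unfolding perms_def by (simp add: permutes_id)

lemma perm_act_perm_act:
  assumes "\<sigma> \<in> perms" "\<tau> \<in> perms"
  shows "perm_act (perm_act x \<sigma>) \<tau> = perm_act x (\<tau> \<circ> \<sigma>)"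
  using assms unfolding perm_act_def perms_def
  by (simp add: o_inv_distrib permutes_bij comp_assoc)

lemma sum_perm_act_reindex:
  fixes f :: "('k::finite \<Rightarrow> 'a::finite) \<Rightarrow> 'b::comm_monoid_add"
  assumes "\<sigma> \<in> perms"
  shows "(\<Sum>x\<in>UNIV. f (perm_act x \<sigma>)) = (\<Sum>x\<in>UNIV. f x)"
proof (rule sum.reindex_bij_witness[where i="\<lambda>y. y \<circ> \<sigma>" and j="\<lambda>x. perm_act x \<sigma>"])
  have "\<sigma> permutes UNIV" using assms by (simp add: perms_def)
  then show "perm_act a \<sigma> \<circ> \<sigma> = a" "perm_act (a \<circ> \<sigma>) \<sigma> = a" for a
    unfolding perm_act_def by (simp_all add: comp_assoc permutes_inv_o)
qed auto

lemma sum_perms_compose_right: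
  assumes "\<tau> \<in> perms"
  shows "(\<Sum>\<sigma>\<in>perms. f (\<sigma> \<circ> \<tau>)) = (\<Sum>\<sigma>\<in>perms. f \<sigma>)"
  using assms sum_permutations_compose_right[of \<tau> UNIV f] unfolding perms_def by simp

lemma sum_perms_perm_act:
  assumes "\<tau> \<in> perms"
  shows "(\<Sum>\<sigma>\<in>perms. f (perm_act (perm_act x \<tau>) \<sigma>)) = (\<Sum>\<sigma>\<in>perms. f (perm_act x \<sigma>))"
proof -
  have "(\<Sum>\<sigma>\<in>perms. f (perm_act (perm_act x \<tau>) \<sigma>)) = (\<Sum>\<sigma>\<in>perms. f (perm_act x (\<sigma> \<circ> \<tau>)))"
    using assms by (intro sum.cong) (auto simp: perm_act_perm_act)
  also have "\<dots> = (\<Sum>\<sigma>\<in>perms. f (perm_act x \<sigma>))"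
    using sum_perms_compose_right[OF assms, of "\<lambda>\<sigma>. f (perm_act x \<sigma>)"] by simp
  finally show ?thesis .
qed

lemma mu_prod_pos: "(\<And>k s. mu k s > 0) \<Longrightarrow> mu_prod mu x > 0"
  unfolding mu_prod_def by (simp add: prod_pos)

lemma sum_perms_mu_prod_pos:
  "(\<And>k s. mu k s > 0) \<Longrightarrow> (\<Sum>\<sigma>\<in>perms. mu_prod mu (perm_act x \<sigma>)) > 0"
  by (rule sum_pos2[OF finite_perms id_in_perms]) (auto simp: mu_prod_pos less_imp_le)

lemma rho_pos: "(\<And>k s. mu k s > 0) \<Longrightarrow> rho mu x > 0"
  unfolding rho_def by (simp add: mu_prod_pos sum_perms_mu_prod_pos)

lemma mu_bar_pos: "(\<And>k s. mu k s > 0) \<Longrightarrow> mu_bar mu x > 0"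
  unfolding mu_bar_def by (simp add: sum_perms_mu_prod_pos)

lemma mu_bar_perm_act: "\<tau> \<in> perms \<Longrightarrow> mu_bar mu (perm_act x \<tau>) = mu_bar mu x"
  unfolding mu_bar_def by (simp add: sum_perms_perm_act)

lemma Gamma_inf_diag: "Gamma_inf mu G x x = 0"
  unfolding Gamma_inf_def by auto

lemma Gamma_inf_nonneg:
  assumes "\<And>k s. mu k s > 0" "\<And>k a b. a \<noteq> b \<Longrightarrow> G k a b \<ge> 0"
  shows "Gamma_inf mu G x y \<ge> 0"
proof (cases "\<exists>!i. x i \<noteq> y i")
  case True
  define i where "i = (THE i. x i \<noteq> y i)"
  have "x i \<noteq> y i" unfolding i_def using theI'[OF True] .
  then have "(\<Sum>\<sigma>\<in>perms. rho mu (perm_act x \<sigma>) * G (\<sigma> i) (x i) (y i)) \<ge> 0"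
    using assms by (intro sum_nonneg mult_nonneg_nonneg) (auto simp: rho_pos less_imp_le)
  then show ?thesis unfolding Gamma_inf_def using True by (simp add: Let_def i_def)
qed (simp add: Gamma_inf_def)

lemma Gamma_inf_perm_act:
  assumes t: "\<tau> \<in> perms"
  shows "Gamma_inf mu G (perm_act x \<tau>) (perm_act y \<tau>) = Gamma_inf mu G x y"
proof -
  have p: "\<tau> permutes UNIV" using t by (simp add: perms_def)
  have inv1: "\<And>i. \<tau> (inv \<tau> i) = i" and inv2: "\<And>j. inv \<tau> (\<tau> j) = j"
    using permutes_inverses[OF p] by auto
  have pa: "\<And>z i. perm_act z \<tau> i = z (inv \<tau> i)" by (simp add: perm_act_def)
  show ?thesis
  proof (cases "\<exists>!j. x j \<noteq> y j")
    case True
    then obtain j where j: "x j \<noteq> y j" and uniq: "\<And>i. x i \<noteq> y i \<Longrightarrow> i = j" by blast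
    have ex': "\<exists>!i. perm_act x \<tau> i \<noteq> perm_act y \<tau> i"
      unfolding pa by (metis inv1 inv2 j uniq)
    have the': "(THE i. perm_act x \<tau> i \<noteq> perm_act y \<tau> i) = \<tau> j"
      unfolding pa by (rule the_equality) (auto simp: inv2 j, metis inv1 uniq)
    have the: "(THE i. x i \<noteq> y i) = j" using j uniq by blast
    have "Gamma_inf mu G (perm_act x \<tau>) (perm_act y \<tau>)
        = (\<Sum>\<sigma>\<in>perms. rho mu (perm_act (perm_act x \<tau>) \<sigma>) * G (\<sigma> (\<tau> j)) (x j) (y j))"
      unfolding Gamma_inf_def using ex' by (simp add: Let_def the'[unfolded pa] pa inv2)
    also have "\<dots> = (\<Sum>\<sigma>\<in>perms. (\<lambda>\<sigma>. rho mu (perm_act x \<sigma>) * G (\<sigma> j) (x j) (y j)) (\<sigma> \<circ> \<tau>))"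
      using t by (intro sum.cong) (auto simp: perm_act_perm_act)
    also have "\<dots> = (\<Sum>\<sigma>\<in>perms. rho mu (perm_act x \<sigma>) * G (\<sigma> j) (x j) (y j))"
      by (rule sum_perms_compose_right[OF t])
    also have "\<dots> = Gamma_inf mu G x y"
      unfolding Gamma_inf_def using True by (simp add: Let_def the)
    finally show ?thesis .
  next
    case False
    then have "\<not> (\<exists>!i. perm_act x \<tau> i \<noteq> perm_act y \<tau> i)"
      unfolding pa by (metis inv1 inv2)
    then show ?thesis using False unfolding Gamma_inf_def by simp
  qed
qed

lemma sum_sqrt_mult_le:
  fixes u v :: "'b \<Rightarrow> real"
  assumes "\<And>s. s \<in> P \<Longrightarrow> u s \<ge> 0" "\<And>s. s \<in> P \<Longrightarrow> v s \<ge> 0"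
  shows "(\<Sum>s\<in>P. sqrt (u s) * sqrt (v s)) \<le> sqrt (\<Sum>s\<in>P. u s) * sqrt (\<Sum>s\<in>P. v s)"
proof -
  have "(\<Sum>s\<in>P. sqrt (u s) * sqrt (v s))\<^sup>2 \<le> (\<Sum>s\<in>P. u s) * (\<Sum>s\<in>P. v s)"
    using Cauchy_Schwarz_ineq_sum[of "\<lambda>s. sqrt (u s)" "\<lambda>s. sqrt (v s)" P] assms by simp
  then show ?thesis
    by (metis real_le_rsqrt real_sqrt_mult)
qed

definition J_edge ::
  "('k::finite \<Rightarrow> 'a::finite \<Rightarrow> real) \<Rightarrow> ('k \<Rightarrow> 'a \<Rightarrow> 'a \<Rightarrow> real) \<Rightarrow> (('k \<Rightarrow> 'a) \<Rightarrow> real)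
     \<Rightarrow> ('k \<Rightarrow> 'a) \<Rightarrow> ('k \<Rightarrow> 'a) \<Rightarrow> real" where
  "J_edge mu G \<nu> x y = Gamma_inf mu G x y *
     (\<nu> x - sqrt (\<nu> x / mu_bar mu x) * sqrt (\<nu> y / mu_bar mu y) * mu_bar mu x)"

text \<open>The diagonal may be added to the inner sums since \<open>\<Gamma>\<^sup>\<infinity>\<close> vanishes there, and the
  \<open>q\<^sup>\<infinity>\<close>-term is distributed over the rates it sums.\<close>
lemma Jfun_eq_sum_J_edge:
  assumes "\<And>k s. mu k s > 0"
  shows "Jfun mu G \<nu> = (\<Sum>x\<in>UNIV. \<Sum>y\<in>UNIV. J_edge mu G \<nu> x y)"
proof -
  have "q_inf mu G x * (\<nu> x / mu_bar mu x) * mu_bar mu x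
      - (\<Sum>y\<in>UNIV - {x}. sqrt (\<nu> x / mu_bar mu x) * sqrt (\<nu> y / mu_bar mu y)
                          * Gamma_inf mu G x y * mu_bar mu x)
      = (\<Sum>y\<in>UNIV. J_edge mu G \<nu> x y)" for x
  proof -
    have "q_inf mu G x * (\<nu> x / mu_bar mu x) * mu_bar mu x = q_inf mu G x * \<nu> x"
      using mu_bar_pos[of mu x, OF assms] by simp
    moreover have "(\<Sum>y\<in>UNIV. J_edge mu G \<nu> x y) = (\<Sum>y\<in>UNIV - {x}. J_edge mu G \<nu> x y)"
      using sum.remove[of UNIV x "J_edge mu G \<nu> x"] by (simp add: J_edge_def Gamma_inf_diag)
    ultimately show ?thesis
      unfolding J_edge_def q_inf_def
      by (simp add: sum_subtractf sum_distrib_left right_diff_distrib ac_simps)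
  qed
  then show ?thesis unfolding Jfun_def Let_def by (simp add: sum_subtractf[symmetric])
qed

lemma Jfun_scale:
  assumes "c \<ge> 0"
  shows "Jfun mu G (\<lambda>x. c * \<nu> x) = c * Jfun mu G \<nu>"
proof -
  have sqrt_scale: "sqrt (c * a / b) * sqrt (c * a' / b') = c * (sqrt (a / b) * sqrt (a' / b'))"
    for a b a' b' :: real
    using assms by (simp add: real_sqrt_mult real_sqrt_divide)
  show ?thesis
    unfolding Jfun_def Let_def sqrt_scale
    by (simp add: sum_distrib_left right_diff_distrib ac_simps if_distrib[of "(*) c"])
qed

lemma Jfun_sum_le:
  assumes pos: "\<And>k s. mu k s > 0" and rates: "\<And>k a b. a \<noteq> b \<Longrightarrow> G k a b \<ge> 0"
    and nonneg: "\<And>s x. s \<in> P \<Longrightarrow> \<nu> s x \<ge> 0"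
  shows "Jfun mu G (\<lambda>x. \<Sum>s\<in>P. \<nu> s x) \<le> (\<Sum>s\<in>P. Jfun mu G (\<nu> s))"
proof -
  have edge: "J_edge mu G (\<lambda>x. \<Sum>s\<in>P. \<nu> s x) x y \<le> (\<Sum>s\<in>P. J_edge mu G (\<nu> s) x y)" for x y
  proof -
    let ?m = "mu_bar mu"
    have "(\<Sum>s\<in>P. sqrt (\<nu> s x / ?m x) * sqrt (\<nu> s y / ?m y))
        \<le> sqrt (\<Sum>s\<in>P. \<nu> s x / ?m x) * sqrt (\<Sum>s\<in>P. \<nu> s y / ?m y)"
      by (intro sum_sqrt_mult_le divide_nonneg_nonneg nonneg less_imp_le[OF mu_bar_pos[of mu, OF pos]])
    then have "(\<Sum>s\<in>P. sqrt (\<nu> s x / ?m x) * sqrt (\<nu> s y / ?m y) * ?m x)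
        \<le> sqrt ((\<Sum>s\<in>P. \<nu> s x) / ?m x) * sqrt ((\<Sum>s\<in>P. \<nu> s y) / ?m y) * ?m x"
      using mu_bar_pos[of mu x, OF pos]
      by (simp add: sum_divide_distrib[symmetric] sum_distrib_right[symmetric])
    then show ?thesis
      using Gamma_inf_nonneg[OF pos rates, where x=x and y=y] unfolding J_edge_def
      by (simp add: sum_distrib_left[symmetric] sum_subtractf mult_left_mono)
  qed
  have "Jfun mu G (\<lambda>x. \<Sum>s\<in>P. \<nu> s x)
      = (\<Sum>x\<in>UNIV. \<Sum>y\<in>UNIV. J_edge mu G (\<lambda>x. \<Sum>s\<in>P. \<nu> s x) x y)"
    by (rule Jfun_eq_sum_J_edge[OF pos])
  also have "\<dots> \<le> (\<Sum>x\<in>UNIV. \<Sum>y\<in>UNIV. \<Sum>s\<in>P. J_edge mu G (\<nu> s) x y)"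
    by (intro sum_mono edge)
  also have "\<dots> = (\<Sum>s\<in>P. \<Sum>x\<in>UNIV. \<Sum>y\<in>UNIV. J_edge mu G (\<nu> s) x y)"
    by (simp add: sum.swap[of _ P])
  also have "\<dots> = (\<Sum>s\<in>P. Jfun mu G (\<nu> s))"
    by (simp add: Jfun_eq_sum_J_edge[OF pos])
  finally show ?thesis .
qed

lemma Jfun_perm_act:
  assumes pos: "\<And>k s. mu k s > 0" and "\<sigma> \<in> perms"
  shows "Jfun mu G (\<lambda>x. \<nu> (perm_act x \<sigma>)) = Jfun mu G \<nu>"
proof -
  have "J_edge mu G (\<lambda>x. \<nu> (perm_act x \<sigma>)) x y = J_edge mu G \<nu> (perm_act x \<sigma>) (perm_act y \<sigma>)"
    for x y
    using assms by (simp add: J_edge_def Gamma_inf_perm_act mu_bar_perm_act)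
  then show ?thesis
    using sum_perm_act_reindex[OF assms(2), of "\<lambda>x. \<Sum>y\<in>UNIV. J_edge mu G \<nu> x (perm_act y \<sigma>)"]
      sum_perm_act_reindex[OF assms(2), of "\<lambda>y. J_edge mu G \<nu> x y" for x]
    by (simp add: Jfun_eq_sum_J_edge[OF pos])
qed

definition symmetrize :: "(('k::finite \<Rightarrow> 'a) \<Rightarrow> real) \<Rightarrow> ('k \<Rightarrow> 'a) \<Rightarrow> real" where
  "symmetrize \<nu> x = (\<Sum>\<sigma>\<in>perms. \<nu> (perm_act x \<sigma>)) / fact (card (UNIV :: 'k set))"

lemma symmetrize_perm_act: "\<tau> \<in> perms \<Longrightarrow> symmetrize \<nu> (perm_act x \<tau>) = symmetrize \<nu> x"
  unfolding symmetrize_def by (simp add: sum_perms_perm_act)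

lemma is_prob_symmetrize:
  fixes \<nu> :: "('k::finite \<Rightarrow> 'a::finite) \<Rightarrow> real"
  assumes "is_prob \<nu>"
  shows "is_prob (symmetrize \<nu>)"
  unfolding is_prob_def
proof
  show "\<forall>x. symmetrize \<nu> x \<ge> 0"
    using assms unfolding symmetrize_def is_prob_def by (simp add: sum_nonneg)
  have "(\<Sum>x\<in>UNIV. symmetrize \<nu> x)
      = (\<Sum>\<sigma>\<in>perms. \<Sum>x\<in>UNIV. \<nu> (perm_act x \<sigma>)) / fact (card (UNIV :: 'k set))"
    unfolding symmetrize_def by (simp add: sum_divide_distrib[symmetric] sum.swap[of _ perms])
  also have "\<dots> = 1"
    using assms unfolding is_prob_def by (simp add: sum_perm_act_reindex card_perms)
  finally show "(\<Sum>x\<in>UNIV. symmetrize \<nu> x) = 1" .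
qed

lemma Mmap_symmetrize:
  fixes \<nu> :: "('k::finite \<Rightarrow> 'a::finite) \<Rightarrow> real"
  shows "Mmap mu (symmetrize \<nu>) = Mmap mu \<nu>"
proof
  fix x
  have "Mmap mu (symmetrize \<nu>) x = rho mu x * (\<Sum>\<sigma>\<in>(perms :: ('k \<Rightarrow> 'k) set). symmetrize \<nu> x)"
    unfolding Mmap_def by (simp add: symmetrize_perm_act)
  also have "\<dots> = Mmap mu \<nu> x"
    by (simp add: Mmap_def symmetrize_def card_perms)
  finally show "Mmap mu (symmetrize \<nu>) x = Mmap mu \<nu> x" .
qed

lemma symmetrize_in_Mset: "\<nu> \<in> Mset mu \<gamma> \<Longrightarrow> symmetrize \<nu> \<in> Mset mu \<gamma>"
  unfolding Mset_def by (simp add: is_prob_symmetrize Mmap_symmetrize)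

lemma nu_sym_eq_symmetrize:
  assumes "\<And>k s. mu k s > 0" and "\<nu> \<in> Mset mu \<gamma>"
  shows "nu_sym mu \<gamma> = symmetrize \<nu>"
proof
  fix x
  have "\<gamma> x = rho mu x * (\<Sum>\<sigma>\<in>perms. \<nu> (perm_act x \<sigma>))"
    using assms(2) unfolding Mset_def Mmap_def by auto
  then show "nu_sym mu \<gamma> x = symmetrize \<nu> x"
    using rho_pos[of mu x, OF assms(1)] unfolding nu_sym_def symmetrize_def by simp
qed

lemma Jfun_symmetrize_le:
  fixes \<nu> :: "('k::finite \<Rightarrow> 'a::finite) \<Rightarrow> real"
  assumes pos: "\<And>k s. mu k s > 0" and rates: "\<And>k a b. a \<noteq> b \<Longrightarrow> G k a b \<ge> 0"
    and nonneg: "\<And>x. \<nu> x \<ge> 0"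
  shows "Jfun mu G (symmetrize \<nu>) \<le> Jfun mu G \<nu>"
proof -
  define n :: real where "n = fact (card (UNIV :: 'k set))"
  have "n > 0" unfolding n_def by simp
  have "Jfun mu G (symmetrize \<nu>) = Jfun mu G (\<lambda>x. 1 / n * (\<Sum>\<sigma>\<in>perms. \<nu> (perm_act x \<sigma>)))"
    unfolding symmetrize_def n_def by simp
  also have "\<dots> = 1 / n * Jfun mu G (\<lambda>x. \<Sum>\<sigma>\<in>perms. \<nu> (perm_act x \<sigma>))"
    using \<open>n > 0\<close> by (intro Jfun_scale) simp
  also have "\<dots> \<le> 1 / n * (\<Sum>\<sigma>\<in>perms. Jfun mu G (\<lambda>x. \<nu> (perm_act x \<sigma>)))"
    using \<open>n > 0\<close> nonneg
    by (intro mult_left_mono Jfun_sum_le[where mu=mu and G=G, OF pos rates]) simp_all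
  also have "\<dots> = Jfun mu G \<nu>"
    using \<open>n > 0\<close> Jfun_perm_act[where mu=mu and G=G, OF pos]
    by (simp add: card_perms n_def)
  finally show ?thesis .
qed

theorem proposition3p2:
  fixes G :: "'k::finite \<Rightarrow> 'a::finite \<Rightarrow> 'a \<Rightarrow> real"
    and mu :: "'k \<Rightarrow> 'a \<Rightarrow> real"
    and \<gamma> :: "('k \<Rightarrow> 'a) \<Rightarrow> real"
  assumes K2: "card (UNIV :: 'k set) \<ge> 2"
    and intens: "\<And>k. intensity_matrix (G k)"
    and irred: "\<And>k. irreducible_im (G k)"
    and inv: "\<And>k. invariant_dist (G k) (mu k)"
    and uniq: "\<And>k m. invariant_dist (G k) m \<Longrightarrow> m = mu k"
    and rev: "\<And>k. reversible (G k) (mu k)"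
    and pos: "\<And>k s. mu k s > 0"
    and gprob: "is_prob \<gamma>"
    and nonempty: "Mset mu \<gamma> \<noteq> {}"
  shows "nu_sym mu \<gamma> \<in> Mset mu \<gamma> \<and> (\<forall>\<nu>\<in>Mset mu \<gamma>. Jfun mu G (nu_sym mu \<gamma>) \<le> Jfun mu G \<nu>)"
proof
  from nonempty obtain \<nu>\<^sub>0 where "\<nu>\<^sub>0 \<in> Mset mu \<gamma>" by blast
  then show "nu_sym mu \<gamma> \<in> Mset mu \<gamma>"
    by (simp add: nu_sym_eq_symmetrize[OF pos] symmetrize_in_Mset)
  show "\<forall>\<nu>\<in>Mset mu \<gamma>. Jfun mu G (nu_sym mu \<gamma>) \<le> Jfun mu G \<nu>"
  proof
    have rates: "\<And>k a b. a \<noteq> b \<Longrightarrow> G k a b \<ge> 0"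
      using intens unfolding intensity_matrix_def by blast
    fix \<nu> assume \<nu>: "\<nu> \<in> Mset mu \<gamma>"
    then have "\<And>x. \<nu> x \<ge> 0" unfolding Mset_def is_prob_def by blast
    then show "Jfun mu G (nu_sym mu \<gamma>) \<le> Jfun mu G \<nu>"
      using Jfun_symmetrize_le[where mu=mu and G=G, OF pos rates] nu_sym_eq_symmetrize[OF pos \<nu>] by simp
  qed
qed

end
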